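(* Let $X$ and $Y$ be real random variables with probability densities $p_X$ and $p_Y$ (with respect to Lebesgue measure on $\mathbb{R}$), and suppose there is a constant $D<\infty$ with $0<p_Y(y)\le D$ for all $y\in\mathbb{R}$. Then for every $A>0$ (writing $\mathcal{A}=[-A,A]$) and every $s>1$, \[ \begin{aligned} \mathrm{KL}(X\|Y)\le\;& (1+|\ln D|)\big[\mathbb{P}(|Y|\ge A)+\|p_X-p_Y\|_1\big]\\ &+\big(\mathbb{E}_X|\ln p_Y(X)|^s\big)^{1/s}\big[\mathbb{P}(|Y|\ge A)+\|p_X-p_Y\|_1\big]^{1-1/s}\\ &+\Big(1+\max_{y\in\mathcal{A}}p_Y(y)^{-1}\Big)\|p_X-p_Y\|_2^2 . \end{aligned} \]
   Context: $\mathrm{KL}(X\|Y)=\int_{\mathbb{R}} p_X(x)\ln\frac{p_X(x)}{p_Y(x)}\,dx$ is the Kullback–Leibler divergence between the laws of $X$ and $Y$. $\|f\|_q$ denotes the $L^q(\mathbb{R})$ norm with respect to Lebesgue measure. $\mathbb{E}_X|\ln p_Y(X)|^s=\int p_X(x)|\ln p_Y(x)|^s\,dx$. *)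

theory Defs
  imports "HOL-Analysis.Analysis"
begin

definition is_density :: "(real \<Rightarrow> real) \<Rightarrow> bool" where
  "is_density p \<longleftrightarrow> p \<in> borel_measurable lborel \<and> (\<forall>x. 0 \<le> p x)
     \<and> (\<integral>\<^sup>+ x. ennreal (p x) \<partial>lborel) = 1"

text \<open>Kullback-Leibler divergence KL(X||Y) of the laws with densities pX, pY,
  as the Lebesgue integral of pX ln(pX/pY) (positive part minus negative part,
  extended-real valued; convention 0 ln 0 = 0).\<close>
definition KL :: "(real \<Rightarrow> real) \<Rightarrow> (real \<Rightarrow> real) \<Rightarrow> ereal" where
  "KL pX pY =
     enn2ereal (\<integral>\<^sup>+ x. ennreal (pX x * ln (pX x / pY x)) \<partial>lborel)
     - enn2ereal (\<integral>\<^sup>+ x. ennreal (- (pX x * ln (pX x / pY x))) \<partial>lborel)"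

definition Lq_pow :: "real \<Rightarrow> (real \<Rightarrow> real) \<Rightarrow> ennreal" where
  "Lq_pow q f = (\<integral>\<^sup>+ x. ennreal (\<bar>f x\<bar> powr q) \<partial>lborel)"

definition enn_powr :: "ennreal \<Rightarrow> real \<Rightarrow> ennreal" where
  "enn_powr x r = (if x = \<infinity> then \<infinity> else ennreal (enn2real x powr r))"

end

theory Submission
  imports Defs
begin

text \<open>Write \<open>f = pX ln (pX / pY)\<close>. By \<open>ln t \<le> t - 1\<close>,
  \<open>f \<le> (pX - pY)\<^sup>2 / pY + (pX - pY)\<close>, which is used on \<open>[-A, A]\<close>; on the tails
  \<open>\<bar>x\<bar> \<ge> A\<close> one uses instead \<open>f \<le> (1 + \<bar>ln D\<bar>) pX + (pX - pY)\<^sup>2 + pX \<bar>ln pY\<bar>\<close>.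
  The linear term \<open>pX - pY\<close> integrates to zero. The tail mass of \<open>pX\<close> is at most that of
  \<open>pY\<close> plus \<open>\<parallel>pX - pY\<parallel>\<^sub>1\<close>, and the tail integral of \<open>pX \<bar>ln pY\<bar>\<close> is controlled by
  Hoelder's inequality for the measure \<open>pX dx\<close> restricted to the tails.\<close>

lemma mult_ln_div_le_sq_div:
  fixes p q :: real
  assumes "0 \<le> p" "0 < q"
  shows "p * ln (p / q) \<le> (p - q)\<^sup>2 / q + (p - q)"
proof (cases "p = 0")
  case False
  then have "0 < p" using assms by simp
  then have "p * ln (p / q) \<le> p * (p / q - 1)"
    using assms by (intro mult_left_mono ln_le_minus_one) auto
  also have "\<dots> = (p - q)\<^sup>2 / q + (p - q)"
    using assms by (simp add: field_simps power2_eq_square)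
  finally show ?thesis .
qed (use assms in \<open>simp add: power2_eq_square\<close>)

lemma neg_mult_ln_div_le:
  fixes p q :: real
  assumes "0 \<le> p" "0 < q"
  shows "- (p * ln (p / q)) \<le> q"
proof (cases "p = 0")
  case False
  then have "0 < p" using assms by simp
  then have "- (p * ln (p / q)) = p * ln (q / p)"
    using assms by (simp add: ln_div algebra_simps)
  also have "\<dots> \<le> p * (q / p - 1)"
    using \<open>0 < p\<close> assms by (intro mult_left_mono ln_le_minus_one) auto
  also have "\<dots> = q - p"
    using \<open>0 < p\<close> by (simp add: field_simps)
  finally show ?thesis using assms by simp
qed (use assms in simp)

text \<open>Beyond \<open>M = max D 1\<close> the excess of \<open>p ln p\<close> over \<open>p ln M\<close> is at most
  \<open>(p - M) + (p - M)\<^sup>2\<close>, and \<open>p - M \<le> p - q\<close> because \<open>q \<le> D \<le> M\<close>.\<close>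
lemma mult_ln_le_sq_diff:
  fixes p q D :: real
  assumes "0 \<le> p" "0 < q" "q \<le> D"
  shows "p * ln p \<le> (1 + \<bar>ln D\<bar>) * p + (p - q)\<^sup>2"
proof -
  define M where "M = max D 1"
  have M: "1 \<le> M" "D \<le> M" "ln M \<le> \<bar>ln D\<bar>"
    using assms by (auto simp: M_def max_def)
  have pM: "p * ln M \<le> p * \<bar>ln D\<bar>"
    using M assms by (intro mult_left_mono) auto
  show ?thesis
  proof (cases "p \<le> M")
    case True
    have "p * ln p \<le> p * ln M"
      using True assms M by (cases "p = 0") (auto intro: mult_left_mono)
    moreover have "0 \<le> p + (p - q)\<^sup>2" using assms by simp
    ultimately show ?thesis using pM by (simp add: algebra_simps)
  next
    case False
    have "p * ln p = p * ln M + p * ln (p / M)"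
      using False M by (simp add: ln_div algebra_simps)
    also have "p * ln (p / M) \<le> p * (p / M - 1)"
      using False M by (intro mult_left_mono ln_le_minus_one) auto
    also have "p * (p / M - 1) = (p - M) + (p - M)\<^sup>2 / M"
      using M by (simp add: field_simps power2_eq_square)
    also have "(p - M)\<^sup>2 / M \<le> (p - M)\<^sup>2"
      using M by (simp add: divide_le_eq mult_le_cancel_left1)
    also have "(p - M)\<^sup>2 \<le> (p - q)\<^sup>2"
      using False M assms by (intro power_mono) auto
    finally have "p * ln p \<le> p * ln M + (p - M) + (p - q)\<^sup>2" by simp
    then show ?thesis using pM M by (simp add: algebra_simps)
  qed
qed

lemma mult_ln_div_le_sq_diff_abs_ln:
  fixes p q D :: real
  assumes "0 \<le> p" "0 < q" "q \<le> D"
  shows "p * ln (p / q) \<le> (1 + \<bar>ln D\<bar>) * p + (p - q)\<^sup>2 + p * \<bar>ln q\<bar>"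
proof (cases "p = 0")
  case False
  then have "p * ln (p / q) = p * ln p - p * ln q"
    using assms by (simp add: ln_div algebra_simps)
  moreover have "- (p * ln q) \<le> p * \<bar>ln q\<bar>"
    using assms by (metis abs_ge_minus_self mult_left_mono mult_minus_right)
  ultimately show ?thesis
    using mult_ln_le_sq_diff[OF assms] by simp
qed simp

lemma Youngs_inequality_scaled:
  fixes u I B s :: real
  assumes "0 \<le> u" "0 < I" "0 < B" "1 < s"
  shows "u \<le> I powr (1 / s) * B powr (1 - 1 / s) * (u powr s / (s * I) + (1 - 1 / s) / B)"
proof (cases "u = 0")
  case False
  then have "0 < u" using assms by simp
  have "(u powr s / I) powr (1 / s) * (1 / B) powr (1 - 1 / s)
      \<le> (1 / s) * (u powr s / I) + (1 - 1 / s) * (1 / B)"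
    using assms \<open>0 < u\<close> by (intro Youngs_inequality_0) auto
  moreover have "(u powr s / I) powr (1 / s) * (1 / B) powr (1 - 1 / s)
      = u / (I powr (1 / s) * B powr (1 - 1 / s))"
    using assms \<open>0 < u\<close> by (simp add: powr_divide powr_powr)
  ultimately show ?thesis
    using assms by (simp add: divide_le_eq mult.commute)
qed (use assms in \<open>simp add: divide_simps\<close>)

lemma ennreal_pos_neg_parts_le:
  fixes a g p q :: real
  assumes "0 \<le> p" "0 \<le> q" "a \<le> g + p - q"
  shows "ennreal a + ennreal q \<le> ennreal (- a) + ennreal p + ennreal g"
proof -
  define g' where "g' = max g 0"
  have "0 \<le> g'" "a \<le> g' + p - q" "ennreal g' = ennreal g"
    using assms by (auto simp: g'_def max_def ennreal_neg)
  show ?thesis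
  proof (cases "0 \<le> a")
    case True
    have "ennreal a + ennreal q = ennreal (a + q)"
      using True assms by simp
    also have "\<dots> \<le> ennreal (p + g')"
      using \<open>a \<le> g' + p - q\<close> by (intro ennreal_leI) linarith
    finally show ?thesis
      using True assms \<open>0 \<le> g'\<close> \<open>ennreal g' = ennreal g\<close> by (simp add: ennreal_neg)
  next
    case False
    have "ennreal q \<le> ennreal (- a + p + g')"
      using \<open>a \<le> g' + p - q\<close> by (intro ennreal_leI) linarith
    also have "\<dots> = ennreal (- a + p) + ennreal g'"
      using False assms \<open>0 \<le> g'\<close> by (intro ennreal_plus) auto
    also have "ennreal (- a + p) = ennreal (- a) + ennreal p"
      using False assms by (intro ennreal_plus) auto
    finally show ?thesis
      using False \<open>ennreal g' = ennreal g\<close> by (simp add: ennreal_neg)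
  qed
qed

lemma enn2ereal_diff_le:
  fixes P N R :: ennreal
  assumes "P \<le> N + R" "N \<noteq> \<infinity>"
  shows "enn2ereal P - enn2ereal N \<le> enn2ereal R"
proof -
  obtain n where n: "N = ennreal n" "0 \<le> n"
    using assms(2) by (cases N) auto
  have "enn2ereal P \<le> ereal n + enn2ereal R"
    using assms(1) n by (simp add: less_eq_ennreal.rep_eq plus_ennreal.rep_eq enn2ereal_ennreal)
  then show ?thesis
    using n by (simp add: enn2ereal_ennreal ereal_minus_le_iff add.commute)
qed

lemma is_densityD:
  assumes "is_density p"
  shows "p \<in> borel_measurable borel" "0 \<le> p x" "(\<integral>\<^sup>+x. ennreal (p x) \<partial>lborel) = 1"
  using assms unfolding is_density_def by auto

text \<open>The term \<open>pX - pY\<close> integrates to zero, and the negative part of \<open>pX ln (pX / pY)\<close>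
  is bounded by \<open>pY\<close>, so the difference defining \<open>KL\<close> is never \<open>\<infinity> - \<infinity>\<close>.\<close>
lemma KL_le_nn_integral:
  assumes "is_density pX" "is_density pY" "\<And>x. 0 < pY x"
    and [measurable]: "g \<in> borel_measurable borel"
    and "\<And>x. pX x * ln (pX x / pY x) \<le> g x + pX x - pY x"
  shows "KL pX pY \<le> enn2ereal (\<integral>\<^sup>+x. ennreal (g x) \<partial>lborel)"
proof -
  note [measurable] = is_densityD(1)[OF assms(1)] is_densityD(1)[OF assms(2)]
  note pX = is_densityD(2,3)[OF assms(1)] and pY = is_densityD(3)[OF assms(2)]
  define f where "f x = pX x * ln (pX x / pY x)" for x
  have [measurable]: "f \<in> borel_measurable borel"
    unfolding f_def by measurable
  have "(\<integral>\<^sup>+x. ennreal (- f x) \<partial>lborel) \<le> (\<integral>\<^sup>+x. ennreal (pY x) \<partial>lborel)"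
    unfolding f_def using pX assms(3) by (intro nn_integral_mono ennreal_leI neg_mult_ln_div_le)
  then have neg_finite: "(\<integral>\<^sup>+x. ennreal (- f x) \<partial>lborel) \<noteq> \<infinity>"
    using pY by (auto simp: top_unique)
  have "1 + (\<integral>\<^sup>+x. ennreal (f x) \<partial>lborel) = (\<integral>\<^sup>+x. ennreal (f x) + ennreal (pY x) \<partial>lborel)"
    using pY by (simp add: nn_integral_add add.commute)
  also have "\<dots> \<le> (\<integral>\<^sup>+x. ennreal (- f x) + ennreal (pX x) + ennreal (g x) \<partial>lborel)"
    using pX assms(3,5) unfolding f_def
    by (intro nn_integral_mono ennreal_pos_neg_parts_le) (auto intro: less_imp_le)
  also have "\<dots> = 1 + ((\<integral>\<^sup>+x. ennreal (- f x) \<partial>lborel) + (\<integral>\<^sup>+x. ennreal (g x) \<partial>lborel))"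
    using pX by (simp add: nn_integral_add algebra_simps)
  finally have "(\<integral>\<^sup>+x. ennreal (f x) \<partial>lborel)
      \<le> (\<integral>\<^sup>+x. ennreal (- f x) \<partial>lborel) + (\<integral>\<^sup>+x. ennreal (g x) \<partial>lborel)"
    by (simp add: ennreal_add_left_cancel_le)
  then show ?thesis
    unfolding KL_def f_def[symmetric] using neg_finite by (rule enn2ereal_diff_le)
qed

lemma enn_powr_top [simp]: "enn_powr top r = top"
  unfolding enn_powr_def by simp

lemma enn_powr_ennreal [simp]: "0 \<le> x \<Longrightarrow> enn_powr (ennreal x) r = ennreal (x powr r)"
  unfolding enn_powr_def by simp

lemma enn_powr_eq_0_iff [simp]: "enn_powr x r = 0 \<longleftrightarrow> x = 0"
  by (cases x) (auto simp: enn_powr_def ennreal_eq_0_iff)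

lemma nn_integral_mult_le_Hoelder_real:
  fixes w u :: "'a \<Rightarrow> real" and I B s :: real
  assumes "1 < s" and [measurable]: "w \<in> borel_measurable M" "u \<in> borel_measurable M"
    and w: "\<And>x. 0 \<le> w x" and "\<And>x. 0 \<le> u x"
    and I: "(\<integral>\<^sup>+x. ennreal (w x * u x powr s) \<partial>M) \<le> ennreal I" "0 < I"
    and B: "(\<integral>\<^sup>+x. ennreal (w x) \<partial>M) \<le> ennreal B" "0 < B"
  shows "(\<integral>\<^sup>+x. ennreal (w x * u x) \<partial>M) \<le> ennreal (I powr (1 / s) * B powr (1 - 1 / s))"
proof -
  define K where "K = I powr (1 / s) * B powr (1 - 1 / s)"
  define a where "a = K / (s * I)"
  define b where "b = K * (1 - 1 / s) / B"
  have ab: "0 \<le> a" "0 \<le> b"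
    using assms by (auto simp: a_def b_def K_def)
  have "ennreal (w x * u x) \<le> ennreal a * ennreal (w x * u x powr s) + ennreal b * ennreal (w x)"
    for x
  proof -
    have "w x * u x \<le> w x * (K * (u x powr s / (s * I) + (1 - 1 / s) / B))"
      unfolding K_def using assms by (intro mult_left_mono Youngs_inequality_scaled) auto
    also have "\<dots> = a * (w x * u x powr s) + b * w x"
      by (simp add: a_def b_def field_simps)
    finally have "ennreal (w x * u x) \<le> ennreal (a * (w x * u x powr s) + b * w x)"
      by (rule ennreal_leI)
    also have "\<dots> = ennreal a * ennreal (w x * u x powr s) + ennreal b * ennreal (w x)"
      using ab w by (simp add: ennreal_mult)
    finally show ?thesis .
  qed
  then have "(\<integral>\<^sup>+x. ennreal (w x * u x) \<partial>M)
      \<le> ennreal a * (\<integral>\<^sup>+x. ennreal (w x * u x powr s) \<partial>M) + ennreal b * (\<integral>\<^sup>+x. ennreal (w x) \<partial>M)"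
    by (simp add: nn_integral_mono flip: nn_integral_add nn_integral_cmult)
  also have "\<dots> \<le> ennreal a * ennreal I + ennreal b * ennreal B"
    using I B by (intro add_mono mult_left_mono) auto
  also have "\<dots> = ennreal (a * I + b * B)"
    using ab I B by (simp add: ennreal_mult)
  also have "a * I + b * B = K"
    using assms by (simp add: a_def b_def field_simps)
  finally show ?thesis unfolding K_def .
qed

lemma nn_integral_mult_le_Hoelder:
  fixes w u :: "'a \<Rightarrow> real" and s :: real and I B :: ennreal
  assumes "1 < s" and [measurable]: "w \<in> borel_measurable M" "u \<in> borel_measurable M"
    and w: "\<And>x. 0 \<le> w x" and u: "\<And>x. 0 \<le> u x"
    and I: "(\<integral>\<^sup>+x. ennreal (w x * u x powr s) \<partial>M) \<le> I"
    and B: "(\<integral>\<^sup>+x. ennreal (w x) \<partial>M) \<le> B"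
  shows "(\<integral>\<^sup>+x. ennreal (w x * u x) \<partial>M) \<le> enn_powr I (1 / s) * enn_powr B (1 - 1 / s)"
proof -
  consider "I = 0 \<or> B = 0" | "I \<noteq> 0" "B \<noteq> 0" "I = \<infinity> \<or> B = \<infinity>"
    | "0 < I" "I < \<infinity>" "0 < B" "B < \<infinity>"
    by (metis infinity_ennreal_def less_top not_gr_zero)
  then show ?thesis
  proof cases
    case 1
    then have "AE x in M. ennreal (w x * u x powr s) = 0 \<or> ennreal (w x) = 0"
      using I B by (auto simp: nn_integral_0_iff_AE)
    then have "AE x in M. ennreal (w x * u x) = 0"
      by eventually_elim (use w u in \<open>auto simp: ennreal_eq_0_iff powr_eq_0_iff mult_le_0_iff\<close>)
    then have "(\<integral>\<^sup>+x. ennreal (w x * u x) \<partial>M) = 0"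
      by (simp add: nn_integral_0_iff_AE)
    then show ?thesis by simp
  next
    case 2
    then show ?thesis
      by (auto simp: ennreal_mult_top ennreal_top_mult)
  next
    case 3
    then obtain i b where "I = ennreal i" "0 < i" "B = ennreal b" "0 < b"
      by (metis ennreal_cases ennreal_less_zero_iff infinity_ennreal_def less_irrefl)
    with I B have "(\<integral>\<^sup>+x. ennreal (w x * u x) \<partial>M) \<le> ennreal (i powr (1 / s) * b powr (1 - 1 / s))"
      by (intro nn_integral_mult_le_Hoelder_real[OF assms(1-5)]) auto
    with \<open>I = ennreal i\<close> \<open>B = ennreal b\<close> \<open>0 < i\<close> \<open>0 < b\<close> show ?thesis
      by (simp add: ennreal_mult)
  qed
qed

lemma set_nn_integral_mult_le_Hoelder:
  fixes w u :: "'a \<Rightarrow> real" and s :: real and I B :: ennreal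
  assumes "1 < s" and [measurable]: "w \<in> borel_measurable M" "u \<in> borel_measurable M" "T \<in> sets M"
    and "\<And>x. 0 \<le> w x" "\<And>x. 0 \<le> u x"
    and "(\<integral>\<^sup>+x\<in>T. ennreal (w x * u x powr s) \<partial>M) \<le> I"
    and "(\<integral>\<^sup>+x\<in>T. ennreal (w x) \<partial>M) \<le> B"
  shows "(\<integral>\<^sup>+x\<in>T. ennreal (w x * u x) \<partial>M) \<le> enn_powr I (1 / s) * enn_powr B (1 - 1 / s)"
proof -
  have set_eq: "(\<integral>\<^sup>+x\<in>T. ennreal (w x * v x) \<partial>M) = (\<integral>\<^sup>+x. ennreal (w x * indicator T x * v x) \<partial>M)"
    for v :: "'a \<Rightarrow> real"
    by (intro nn_integral_cong) (simp add: indicator_def)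
  show ?thesis
    using set_eq[of u] set_eq[of "\<lambda>x. u x powr s"] set_eq[of "\<lambda>_. 1"] assms
      nn_integral_mult_le_Hoelder[of s "\<lambda>x. w x * indicator T x" M u I B]
    by simp
qed

lemma set_nn_integral_le_L1:
  fixes p q :: "'a \<Rightarrow> real"
  assumes [measurable]: "p \<in> borel_measurable M" "q \<in> borel_measurable M" "T \<in> sets M"
    and "\<And>x. 0 \<le> q x"
  shows "(\<integral>\<^sup>+x\<in>T. ennreal (p x) \<partial>M)
    \<le> (\<integral>\<^sup>+x\<in>T. ennreal (q x) \<partial>M) + (\<integral>\<^sup>+x. ennreal \<bar>p x - q x\<bar> \<partial>M)"
proof -
  have "ennreal (p x) * indicator T x \<le> ennreal (q x) * indicator T x + ennreal \<bar>p x - q x\<bar>" for x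
  proof (cases "x \<in> T")
    case True
    have "ennreal (p x) \<le> ennreal (q x + \<bar>p x - q x\<bar>)"
      by (intro ennreal_leI) linarith
    with True assms(4) show ?thesis by simp
  qed simp
  then have "(\<integral>\<^sup>+x\<in>T. ennreal (p x) \<partial>M)
      \<le> (\<integral>\<^sup>+x. ennreal (q x) * indicator T x + ennreal \<bar>p x - q x\<bar> \<partial>M)"
    by (rule nn_integral_mono)
  then show ?thesis by (simp add: nn_integral_add)
qed

lemma set_nn_integral_div_le_SUP:
  fixes f q :: "'a \<Rightarrow> real"
  assumes "f \<in> borel_measurable M" "\<And>x. 0 \<le> f x" "K \<subseteq> K'"
  shows "(\<integral>\<^sup>+x\<in>K. ennreal (f x / q x) \<partial>M)
    \<le> (SUP y\<in>K'. ennreal (1 / q y)) * (\<integral>\<^sup>+x. ennreal (f x) \<partial>M)"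
proof -
  have "ennreal (f x / q x) * indicator K x \<le> (SUP y\<in>K'. ennreal (1 / q y)) * ennreal (f x)" for x
  proof (cases "x \<in> K")
    case True
    have "ennreal (f x / q x) = ennreal (1 / q x) * ennreal (f x)"
      using ennreal_mult''[OF assms(2), of "1 / q x" x] by simp
    also have "\<dots> \<le> (SUP y\<in>K'. ennreal (1 / q y)) * ennreal (f x)"
      using True assms(3) by (intro mult_right_mono SUP_upper) auto
    finally show ?thesis using True by simp
  qed simp
  then show ?thesis
    using assms(1) by (simp add: nn_integral_mono flip: nn_integral_cmult)
qed

lemma Lq_pow_1: "Lq_pow 1 f = (\<integral>\<^sup>+x. ennreal \<bar>f x\<bar> \<partial>lborel)"
  unfolding Lq_pow_def by simp

lemma Lq_pow_2: "Lq_pow 2 f = (\<integral>\<^sup>+x. ennreal ((f x)\<^sup>2) \<partial>lborel)"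
  unfolding Lq_pow_def by (simp add: powr_numeral)

lemma KL_le_tail_center:
  fixes T :: "real set"
  assumes "is_density pX" "is_density pY" "\<And>x. 0 < pY x" "\<And>x. pY x \<le> D"
    and [measurable]: "T \<in> sets borel"
  shows "KL pX pY \<le> enn2ereal
    (ennreal \<bar>ln D\<bar> * (\<integral>\<^sup>+x\<in>T. ennreal (pX x) \<partial>lborel) + (\<integral>\<^sup>+x\<in>T. ennreal (pY x) \<partial>lborel)
     + (\<integral>\<^sup>+x\<in>T. ennreal (pX x * \<bar>ln (pY x)\<bar>) \<partial>lborel)
     + (\<integral>\<^sup>+x\<in>T. ennreal ((pX x - pY x)\<^sup>2) \<partial>lborel)
     + (\<integral>\<^sup>+x\<in>-T. ennreal ((pX x - pY x)\<^sup>2 / pY x) \<partial>lborel))"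
proof -
  note [measurable] = is_densityD(1)[OF assms(1)] is_densityD(1)[OF assms(2)]
  note pX = is_densityD(2)[OF assms(1)]
  define g where "g x = (if x \<in> T
    then \<bar>ln D\<bar> * pX x + pY x + pX x * \<bar>ln (pY x)\<bar> + (pX x - pY x)\<^sup>2
    else (pX x - pY x)\<^sup>2 / pY x)" for x
  have [measurable]: "g \<in> borel_measurable borel"
    unfolding g_def by measurable
  have "pX x * ln (pX x / pY x) \<le> g x + pX x - pY x" for x
    using mult_ln_div_le_sq_diff_abs_ln[OF pX assms(3,4)] mult_ln_div_le_sq_div[OF pX assms(3)]
    by (simp add: g_def algebra_simps)
  then have "KL pX pY \<le> enn2ereal (\<integral>\<^sup>+x. ennreal (g x) \<partial>lborel)"
    using assms(1-3) by (intro KL_le_nn_integral) auto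
  also have "(\<integral>\<^sup>+x. ennreal (g x) \<partial>lborel) = (\<integral>\<^sup>+x.
      ennreal \<bar>ln D\<bar> * (ennreal (pX x) * indicator T x) + ennreal (pY x) * indicator T x
      + ennreal (pX x * \<bar>ln (pY x)\<bar>) * indicator T x + ennreal ((pX x - pY x)\<^sup>2) * indicator T x
      + ennreal ((pX x - pY x)\<^sup>2 / pY x) * indicator (- T) x \<partial>lborel)"
  proof (intro nn_integral_cong)
    fix x
    have "0 \<le> \<bar>ln D\<bar> * pX x" "0 \<le> pY x" "0 \<le> pX x * \<bar>ln (pY x)\<bar>"
      using pX[of x] assms(3)[of x] by auto
    then show "ennreal (g x) = ennreal \<bar>ln D\<bar> * (ennreal (pX x) * indicator T x)
      + ennreal (pY x) * indicator T x + ennreal (pX x * \<bar>ln (pY x)\<bar>) * indicator T x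
      + ennreal ((pX x - pY x)\<^sup>2) * indicator T x
      + ennreal ((pX x - pY x)\<^sup>2 / pY x) * indicator (- T) x"
      by (simp add: g_def ennreal_mult' add_nonneg_nonneg)
  qed
  also have "\<dots> = ennreal \<bar>ln D\<bar> * (\<integral>\<^sup>+x\<in>T. ennreal (pX x) \<partial>lborel)
      + (\<integral>\<^sup>+x\<in>T. ennreal (pY x) \<partial>lborel) + (\<integral>\<^sup>+x\<in>T. ennreal (pX x * \<bar>ln (pY x)\<bar>) \<partial>lborel)
      + (\<integral>\<^sup>+x\<in>T. ennreal ((pX x - pY x)\<^sup>2) \<partial>lborel)
      + (\<integral>\<^sup>+x\<in>-T. ennreal ((pX x - pY x)\<^sup>2 / pY x) \<partial>lborel)"
    by (simp add: nn_integral_add nn_integral_cmult)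
  finally show ?thesis .
qed

theorem theorem2p1:
  fixes pX pY :: "real \<Rightarrow> real" and D A s :: real
  assumes "is_density pX" and "is_density pY"
    and "\<forall>y. 0 < pY y \<and> pY y \<le> D"
    and "A > 0" and "s > 1"
  shows "KL pX pY \<le> enn2ereal (
     (let B = (\<integral>\<^sup>+ y. ennreal (pY y) * indicator {y. A \<le> \<bar>y\<bar>} y \<partial>lborel)
              + Lq_pow 1 (\<lambda>x. pX x - pY x)
      in (1 + ennreal \<bar>ln D\<bar>) * B
         + enn_powr (\<integral>\<^sup>+ x. ennreal (pX x * \<bar>ln (pY x)\<bar> powr s) \<partial>lborel) (1 / s)
           * enn_powr B (1 - 1 / s)
         + (1 + (SUP y\<in>{-A..A}. ennreal (1 / pY y))) * Lq_pow 2 (\<lambda>x. pX x - pY x)))"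
proof -
  note [measurable] = is_densityD(1)[OF assms(1)] is_densityD(1)[OF assms(2)]
  note pX = is_densityD(2)[OF assms(1)]
  have pY: "\<And>x. 0 < pY x" "\<And>x. pY x \<le> D"
    using assms(3) by auto
  define T where "T = {y::real. A \<le> \<bar>y\<bar>}"
  have [measurable]: "T \<in> sets borel"
    unfolding T_def by measurable
  define B where "B = (\<integral>\<^sup>+x\<in>T. ennreal (pY x) \<partial>lborel) + Lq_pow 1 (\<lambda>x. pX x - pY x)"
  define I where "I = (\<integral>\<^sup>+x. ennreal (pX x * \<bar>ln (pY x)\<bar> powr s) \<partial>lborel)"
  define S where "S = (SUP y\<in>{-A..A}. ennreal (1 / pY y))"
  define L2 where "L2 = Lq_pow 2 (\<lambda>x. pX x - pY x)"
  have tail_pX: "(\<integral>\<^sup>+x\<in>T. ennreal (pX x) \<partial>lborel) \<le> B"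
    unfolding B_def Lq_pow_1 using pY by (intro set_nn_integral_le_L1) (auto intro: less_imp_le)
  have "(\<integral>\<^sup>+x\<in>T. ennreal (pX x * \<bar>ln (pY x)\<bar> powr s) \<partial>lborel) \<le> I"
    unfolding I_def by (intro nn_integral_mono) (auto simp: indicator_def)
  then have tail_log: "(\<integral>\<^sup>+x\<in>T. ennreal (pX x * \<bar>ln (pY x)\<bar>) \<partial>lborel)
      \<le> enn_powr I (1 / s) * enn_powr B (1 - 1 / s)"
    using assms(5) pX tail_pX by (intro set_nn_integral_mult_le_Hoelder) auto
  have tail_sq: "(\<integral>\<^sup>+x\<in>T. ennreal ((pX x - pY x)\<^sup>2) \<partial>lborel) \<le> L2"
    unfolding L2_def Lq_pow_2 by (intro nn_integral_mono) (auto simp: indicator_def)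
  have center: "(\<integral>\<^sup>+x\<in>-T. ennreal ((pX x - pY x)\<^sup>2 / pY x) \<partial>lborel) \<le> S * L2"
    unfolding S_def L2_def Lq_pow_2 T_def by (intro set_nn_integral_div_le_SUP) auto
  have tail_pY: "(\<integral>\<^sup>+x\<in>T. ennreal (pY x) \<partial>lborel) \<le> B"
    unfolding B_def by simp
  have "KL pX pY
    \<le> enn2ereal (ennreal \<bar>ln D\<bar> * B + B + enn_powr I (1 / s) * enn_powr B (1 - 1 / s) + L2 + S * L2)"
    using tail_pX tail_pY tail_log tail_sq center
    by (intro order_trans[OF KL_le_tail_center[OF assms(1,2) pY \<open>T \<in> sets borel\<close>]]
        less_eq_ennreal.rep_eq[THEN iffD1] add_mono mult_left_mono) auto
  then show ?thesis
    by (simp add: Let_def B_def I_def S_def L2_def T_def algebra_simps)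
qed

end
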